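(* With the notation of the context, consider: (i) $v\sim_h1$ in $\mathcal U(A)$; (ii) $p\sim\mathrm{diag}(1_A,0)$ (Murray–von Neumann equivalence) in $C(\mathbb T,M_2(A))$; (iii) the $C(\mathbb T)$-algebra $\mathcal B=p\,C(\mathbb T,M_2(A))\,p$ is properly infinite. Then (i) and (ii) are equivalent for every unital $C^*$-algebra $A$, and if $A$ is in addition properly infinite then (i), (ii), (iii) are all equivalent.
   Context: Let $A$ be a unital $C^*$-algebra and $v\in A$ a unitary such that $\mathrm{diag}(v,1)$ is homotopic to $1$ in $\mathcal U(M_2(A))$. Let $t\mapsto u_t$, $t\in[0,1]$, be a continuous path of unitaries in $M_2(A)$ with $u_0=1$, $u_1=\mathrm{diag}(v,1)$, and put $p(t)=u_t\,\mathrm{diag}(1,0)\,u_t^*$. Identifying $C(\mathbb T,D)$ with continuous $f\colon[0,1]\to D$ with $f(0)=f(1)$, $p$ is a projection in $C(\mathbb T,M_2(A))$; $\mathcal B=pC(\mathbb T,M_2(A))p$ is a unital $C(\mathbb T)$-algebra with fibres $p(t)M_2(A)p(t)\cong A$. A unital $C^*$-algebra is properly infinite if there are mutually orthogonal projections $e,f$ with $e\sim1\sim f$. $v\sim_h1$ means $v$ is connected to $1$ by a continuous path of unitaries. *)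

theory Defs
  imports Complex_Main
begin

class cstar_algebra = real_normed_algebra_1 + banach +
  fixes cscale :: "complex \<Rightarrow> 'a \<Rightarrow> 'a"
    and cstar :: "'a \<Rightarrow> 'a"
  assumes cscale_add_right: "cscale c (x + y) = cscale c x + cscale c y"
    and cscale_add_left: "cscale (b + c) x = cscale b x + cscale c x"
    and cscale_cscale: "cscale b (cscale c x) = cscale (b * c) x"
    and cscale_of_real: "cscale (complex_of_real r) x = scaleR r x"
    and mult_cscale_left: "cscale c x * y = cscale c (x * y)"
    and mult_cscale_right: "x * cscale c y = cscale c (x * y)"
    and norm_cscale: "norm (cscale c x) = cmod c * norm x"
    and cstar_cstar: "cstar (cstar x) = x"
    and cstar_add: "cstar (x + y) = cstar x + cstar y"
    and cstar_cscale: "cstar (cscale c x) = cscale (cnj c) (cstar x)"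
    and cstar_mult: "cstar (x * y) = cstar y * cstar x"
    and cstar_identity: "norm (cstar x * x) = norm x * norm x"

definition unitary :: "'a::cstar_algebra \<Rightarrow> bool" where
  "unitary x \<longleftrightarrow> cstar x * x = 1 \<and> x * cstar x = 1"

definition is_proj :: "'a::cstar_algebra \<Rightarrow> bool" where
  "is_proj e \<longleftrightarrow> cstar e = e \<and> e * e = e"

definition mvn :: "'a::cstar_algebra \<Rightarrow> 'a \<Rightarrow> bool" where
  "mvn e f \<longleftrightarrow> (\<exists>w. cstar w * w = e \<and> w * cstar w = f)"

definition properly_infinite :: "'a::cstar_algebra itself \<Rightarrow> bool" where
  "properly_infinite _ \<longleftrightarrow>
     (\<exists>e f :: 'a. is_proj e \<and> is_proj f \<and> e * f = 0 \<and> mvn e 1 \<and> mvn f 1)"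

definition homotopic_to_one :: "'a::cstar_algebra \<Rightarrow> bool" where
  "homotopic_to_one v \<longleftrightarrow>
     (\<exists>\<gamma> :: real \<Rightarrow> 'a. continuous_on {0..1} \<gamma> \<and> (\<forall>t\<in>{0..1}. unitary (\<gamma> t))
        \<and> \<gamma> 0 = v \<and> \<gamma> 1 = 1)"

datatype 'a m2 = M2 (e11: 'a) (e12: 'a) (e21: 'a) (e22: 'a)

fun m2_mult :: "'a::cstar_algebra m2 \<Rightarrow> 'a m2 \<Rightarrow> 'a m2" where
  "m2_mult (M2 a b c d) (M2 e f g h) =
     M2 (a*e + b*g) (a*f + b*h) (c*e + d*g) (c*f + d*h)"

fun m2_star :: "'a::cstar_algebra m2 \<Rightarrow> 'a m2" where
  "m2_star (M2 a b c d) = M2 (cstar a) (cstar c) (cstar b) (cstar d)"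

definition diag :: "'a::cstar_algebra \<Rightarrow> 'a \<Rightarrow> 'a m2" where
  "diag x y = M2 x 0 0 y"

definition m2_one :: "'a::cstar_algebra m2" where
  "m2_one = diag 1 1"

definition m2_zero :: "'a::cstar_algebra m2" where
  "m2_zero = diag 0 0"

definition m2_unitary :: "'a::cstar_algebra m2 \<Rightarrow> bool" where
  "m2_unitary x \<longleftrightarrow> m2_mult (m2_star x) x = m2_one \<and> m2_mult x (m2_star x) = m2_one"

text \<open>Continuity of an M_2(A)-valued map: the C*-norm topology on M_2(A) is the
  product (entrywise) topology.\<close>
definition m2_cont :: "real set \<Rightarrow> (real \<Rightarrow> 'a::cstar_algebra m2) \<Rightarrow> bool" where
  "m2_cont S f \<longleftrightarrow> continuous_on S (\<lambda>t. e11 (f t)) \<and> continuous_on S (\<lambda>t. e12 (f t))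
      \<and> continuous_on S (\<lambda>t. e21 (f t)) \<and> continuous_on S (\<lambda>t. e22 (f t))"

section \<open>C(T, M_2(A)) as continuous f on [0,1] with f 0 = f 1\<close>

text \<open>Elements are functions real => M_2(A); only their values on [0,1] matter,
  so all identities below are stated pointwise on [0,1].\<close>
definition in_CT :: "(real \<Rightarrow> 'a::cstar_algebra m2) \<Rightarrow> bool" where
  "in_CT f \<longleftrightarrow> m2_cont {0..1} f \<and> f 0 = f 1"

definition mvn_CT :: "(real \<Rightarrow> 'a::cstar_algebra m2) \<Rightarrow> (real \<Rightarrow> 'a m2) \<Rightarrow> bool" where
  "mvn_CT p q \<longleftrightarrow> (\<exists>w. in_CT w \<and> (\<forall>t\<in>{0..1}.
      m2_mult (m2_star (w t)) (w t) = p t \<and> m2_mult (w t) (m2_star (w t)) = q t))"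

definition in_corner :: "(real \<Rightarrow> 'a::cstar_algebra m2) \<Rightarrow> (real \<Rightarrow> 'a m2) \<Rightarrow> bool" where
  "in_corner p x \<longleftrightarrow> in_CT x \<and> (\<forall>t\<in>{0..1}. m2_mult (m2_mult (p t) (x t)) (p t) = x t)"

definition proj_corner :: "(real \<Rightarrow> 'a::cstar_algebra m2) \<Rightarrow> (real \<Rightarrow> 'a m2) \<Rightarrow> bool" where
  "proj_corner p e \<longleftrightarrow> in_corner p e \<and>
     (\<forall>t\<in>{0..1}. m2_star (e t) = e t \<and> m2_mult (e t) (e t) = e t)"

definition mvn_corner :: "(real \<Rightarrow> 'a::cstar_algebra m2) \<Rightarrow> (real \<Rightarrow> 'a m2) \<Rightarrow> (real \<Rightarrow> 'a m2) \<Rightarrow> bool" where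
  "mvn_corner p e f \<longleftrightarrow> (\<exists>w. in_corner p w \<and> (\<forall>t\<in>{0..1}.
      m2_mult (m2_star (w t)) (w t) = e t \<and> m2_mult (w t) (m2_star (w t)) = f t))"

definition properly_infinite_corner :: "(real \<Rightarrow> 'a::cstar_algebra m2) \<Rightarrow> bool" where
  "properly_infinite_corner p \<longleftrightarrow>
     (\<exists>e f. proj_corner p e \<and> proj_corner p f
        \<and> (\<forall>t\<in>{0..1}. m2_mult (e t) (f t) = m2_zero)
        \<and> mvn_corner p e p \<and> mvn_corner p f p)"

end

theory Submission
  imports Defs
begin

text \<open>
  Compression by \<open>u(t)\<close> identifies the fibres of \<open>\<B>\<close> with \<open>A\<close> (\<open>compress\<close>), and a
  partial isometry from \<open>p\<close> to \<open>diag(1,0)\<close> transports \<open>A\<close> onto \<open>\<B>\<close> (\<open>transport\<close>).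
  (i) \<open>\<Leftrightarrow>\<close> (ii) is then a direct computation, and (ii) \<open>\<Rightarrow>\<close> (iii) transports the witnesses
  of proper infiniteness of \<open>A\<close> into \<open>\<B>\<close>. For (iii) \<open>\<Rightarrow>\<close> (i), \<open>\<B>\<close> yields continuous
  families of isometries of \<open>A\<close> with orthogonal ranges, conjugated by \<open>v\<close> from \<open>t = 0\<close> to
  \<open>t = 1\<close>; an explicit algebraic formula (\<open>glue\<close>) turns them, together with \<open>u(t)\<close> and two
  isometries of \<open>A\<close>, into a path of unitaries \<open>g\<close> with \<open>g(1) = g(0) v\<close>.
\<close>

lemma cstar_one [simp]: "cstar (1::'a::cstar_algebra) = 1"
  using cstar_mult[of "cstar (1::'a)" 1] by (simp add: cstar_cstar)

lemma cstar_zero [simp]: "cstar (0::'a::cstar_algebra) = 0"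
  using cstar_add[of "0::'a" 0] by simp

lemma cstar_minus [simp]: "cstar (- x::'a::cstar_algebra) = - cstar x"
proof -
  have "cstar x + cstar (- x) = 0" using cstar_add[of x "- x"] by simp
  thus ?thesis by (metis minus_unique)
qed

lemma cstar_diff [simp]: "cstar (x - y::'a::cstar_algebra) = cstar x - cstar y"
  using cstar_add[of x "- y"] by simp

lemma cstar_scaleR: "cstar (scaleR r x::'a::cstar_algebra) = scaleR r (cstar x)"
  by (metis cscale_of_real cstar_cscale complex_cnj_complex_of_real)

lemma norm_cstar [simp]: "norm (cstar x::'a::cstar_algebra) = norm x"
proof -
  have le: "norm y \<le> norm (cstar y)" for y :: 'a
  proof (cases "y = 0")
    case False
    have "norm y * norm y = norm (cstar y * y)" by (simp add: cstar_identity)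
    also have "\<dots> \<le> norm (cstar y) * norm y" by (rule norm_mult_ineq)
    finally show ?thesis using False by simp
  qed simp
  show ?thesis using le[of x] le[of "cstar x"] by (simp add: cstar_cstar)
qed

lemma bounded_linear_cstar: "bounded_linear (cstar :: 'a::cstar_algebra \<Rightarrow> 'a)"
  by (rule bounded_linear_intro[where K=1]) (auto simp: cstar_add cstar_scaleR)

lemma continuous_on_cstar [continuous_intros]:
  "continuous_on S f \<Longrightarrow> continuous_on S (\<lambda>t. cstar (f t::'a::cstar_algebra))"
  using bounded_linear.continuous_on[OF bounded_linear_cstar] .

lemma cstar_mult_self_eq_0: "cstar x * x = 0 \<Longrightarrow> (x::'a::cstar_algebra) = 0"
  using cstar_identity[of x] by simp

lemma mult_cstar_self_eq_0: "x * cstar x = 0 \<Longrightarrow> (x::'a::cstar_algebra) = 0"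
  using cstar_mult_self_eq_0[of "cstar x"] by (metis cstar_cstar cstar_zero)

text \<open>Rewriting a product \<open>x y\<close> inside a longer right-nested product; this is how
  algebraic relations such as \<open>s\<^sup>* s = 1\<close> are fed to the simplifier.\<close>
lemma mult_assoc_subst: "x * y = w \<Longrightarrow> x * (y * z) = w * (z::'a::semigroup_mult)"
  by (simp add: mult.assoc[symmetric])

lemma unitary_mult: "unitary x \<Longrightarrow> unitary y \<Longrightarrow> unitary (x * (y::'a::cstar_algebra))"
  unfolding unitary_def by (simp add: cstar_mult mult.assoc mult_assoc_subst)

lemma unitary_cstar: "unitary x \<Longrightarrow> unitary (cstar (x::'a::cstar_algebra))"
  unfolding unitary_def by (simp add: cstar_cstar)

text \<open>Isometries whose range projections are orthogonal are themselves orthogonal: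
  \<open>s\<^sub>1\<^sup>* s\<^sub>2 = s\<^sub>1\<^sup>* (s\<^sub>1 s\<^sub>1\<^sup>*)(s\<^sub>2 s\<^sub>2\<^sup>*) s\<^sub>2 = 0\<close>.\<close>
lemma isometries_orthogonal:
  fixes s1 s2 :: "'a::cstar_algebra"
  assumes "cstar s1 * s1 = 1" "cstar s2 * s2 = 1" "(s1 * cstar s1) * (s2 * cstar s2) = 0"
  shows "cstar s1 * s2 = 0"
proof -
  have "cstar s1 * s2 = cstar s1 * ((s1 * cstar s1) * (s2 * cstar s2)) * s2"
    by (simp add: mult.assoc assms(2) mult_assoc_subst[OF assms(1)])
  thus ?thesis using assms(3) by simp
qed

lemma m2_mult_assoc: "m2_mult (m2_mult x y) z = m2_mult x (m2_mult y z)"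
  by (cases x; cases y; cases z) (simp add: algebra_simps)

lemma m2_mult_assoc_subst: "m2_mult x y = w \<Longrightarrow> m2_mult x (m2_mult y z) = m2_mult w z"
  by (simp add: m2_mult_assoc[symmetric])

lemma m2_star_mult: "m2_star (m2_mult x y) = m2_mult (m2_star y) (m2_star x)"
  by (cases x; cases y) (simp add: cstar_add cstar_mult add.commute)

lemma m2_star_star [simp]: "m2_star (m2_star x) = x"
  by (cases x) (simp add: cstar_cstar)

lemma m2_one_mult [simp]: "m2_mult m2_one x = x"
  by (cases x) (simp add: m2_one_def diag_def)

lemma m2_mult_one [simp]: "m2_mult x m2_one = x"
  by (cases x) (simp add: m2_one_def diag_def)

lemma m2_unitaryD:
  assumes "m2_unitary U"
  shows "m2_mult (m2_star U) U = m2_one" "m2_mult U (m2_star U) = m2_one"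
    "m2_mult (m2_star U) (m2_mult U z) = z" "m2_mult U (m2_mult (m2_star U) z) = z"
  using assms by (auto simp: m2_unitary_def m2_mult_assoc[symmetric])

lemma m2_unitary_entries:
  assumes "m2_unitary (M2 a b c d)"
  shows "cstar a * a + cstar c * c = 1" "cstar a * b + cstar c * d = 0"
    "cstar b * b + cstar d * d = 1" "a * cstar a + b * cstar b = 1"
    "a * cstar c + b * cstar d = 0" "c * cstar c + d * cstar d = 1"
  using assms by (simp_all add: m2_unitary_def m2_one_def diag_def)

abbreviation corner :: "'a::cstar_algebra \<Rightarrow> 'a m2" where
  "corner y \<equiv> M2 y 0 0 0"

lemma corner_mult: "m2_mult (corner x) (corner y) = corner (x * y)"
  by simp

lemma diag_1_0: "diag (1::'a::cstar_algebra) 0 = corner 1"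
  by (simp add: diag_def)

lemma m2_cont_mult: "m2_cont S f \<Longrightarrow> m2_cont S g \<Longrightarrow> m2_cont S (\<lambda>t. m2_mult (f t) (g t))"
proof -
  have eq: "m2_mult x y = M2 (e11 x * e11 y + e12 x * e21 y) (e11 x * e12 y + e12 x * e22 y)
     (e21 x * e11 y + e22 x * e21 y) (e21 x * e12 y + e22 x * e22 y)" for x y :: "'a m2"
    by (cases x; cases y) simp
  show "m2_cont S f \<Longrightarrow> m2_cont S g \<Longrightarrow> ?thesis"
    unfolding m2_cont_def eq m2.sel by (intro conjI continuous_intros; simp)
qed

lemma m2_cont_star: "m2_cont S f \<Longrightarrow> m2_cont S (\<lambda>t. m2_star (f t))"
proof -
  have eq: "m2_star x = M2 (cstar (e11 x)) (cstar (e21 x)) (cstar (e12 x)) (cstar (e22 x))"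
    for x :: "'a m2" by (cases x) simp
  show "m2_cont S f \<Longrightarrow> ?thesis"
    unfolding m2_cont_def eq m2.sel by (intro conjI continuous_on_cstar; simp)
qed

lemma m2_cont_const: "m2_cont S (\<lambda>t. c)"
  by (simp add: m2_cont_def)

lemma m2_cont_corner: "continuous_on S f \<Longrightarrow> m2_cont S (\<lambda>t. corner (f t))"
  by (simp add: m2_cont_def)

text \<open>If a path of unitaries \<open>g\<close> on \<open>[0,1]\<close> satisfies \<open>g(1) = g(0) v\<close>, then
  \<open>s \<mapsto> g(0)\<^sup>* g(1 - s)\<close> connects \<open>v\<close> to \<open>1\<close>.\<close>
lemma homotopic_to_one_from_path:
  fixes g :: "real \<Rightarrow> 'a::cstar_algebra"
  assumes cont: "continuous_on {0..1} g" and unit: "\<forall>t\<in>{0..1}. unitary (g t)"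
    and ends: "g 1 = g 0 * v"
  shows "homotopic_to_one v"
  unfolding homotopic_to_one_def
proof (intro exI conjI)
  let ?h = "\<lambda>s. cstar (g 0) * g (1 - s)"
  have g0: "unitary (g 0)" using unit by auto
  have "continuous_on {0..1} (\<lambda>s. g (1 - s))"
    by (rule continuous_on_compose2[OF cont]) (auto intro: continuous_intros)
  thus "continuous_on {0..1} ?h" by (intro continuous_intros)
  show "\<forall>s\<in>{0..1}. unitary (?h s)" using unit g0 by (auto intro!: unitary_mult unitary_cstar)
  show "?h 0 = v" using g0 by (simp add: ends mult.assoc[symmetric] unitary_def)
  show "?h 1 = 1" using g0 by (simp add: unitary_def)
qed

text \<open>On the corner
  \<open>P M\<^sub>2(A) P\<close> with \<open>P = U diag(1,0) U\<^sup>*\<close> this is a \<open>*\<close>-isomorphism onto \<open>A\<close>; it identifies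
  the fibres of \<open>\<B>\<close> with \<open>A\<close>.\<close>
definition compress :: "'a::cstar_algebra m2 \<Rightarrow> 'a m2 \<Rightarrow> 'a" where
  "compress U X = e11 (m2_mult (m2_mult (m2_star U) X) U)"

lemma compress_corner:
  assumes U: "m2_unitary U" and P: "P = m2_mult (m2_mult U (corner 1)) (m2_star U)"
    and X: "m2_mult (m2_mult P X) P = X"
  shows "m2_mult (m2_mult (m2_star U) X) U = corner (compress U X)"
proof -
  note u = m2_unitaryD[OF U]
  have "m2_mult (m2_mult (m2_star U) X) U
      = m2_mult (corner 1) (m2_mult (m2_mult (m2_mult (m2_star U) X) U) (corner 1))"
    by (subst X[symmetric]) (simp add: P m2_mult_assoc u m2_star_mult)
  also have "\<dots> = corner (compress U X)"
    unfolding compress_def by (cases "m2_mult (m2_mult (m2_star U) X) U") simp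
  finally show ?thesis .
qed

lemma compress_mult:
  assumes U: "m2_unitary U" and P: "P = m2_mult (m2_mult U (corner 1)) (m2_star U)"
    and X: "m2_mult (m2_mult P X) P = X" and Y: "m2_mult (m2_mult P Y) P = Y"
  shows "compress U (m2_mult X Y) = compress U X * compress U Y"
proof -
  have "m2_mult (m2_mult (m2_star U) (m2_mult X Y)) U
     = m2_mult (m2_mult (m2_mult (m2_star U) X) U) (m2_mult (m2_mult (m2_star U) Y) U)"
    by (simp add: m2_mult_assoc m2_unitaryD[OF U])
  also have "\<dots> = corner (compress U X * compress U Y)"
    by (simp add: compress_corner[OF U P X] compress_corner[OF U P Y])
  finally show ?thesis by (simp add: compress_def)
qed

lemma compress_star: "compress U (m2_star X) = cstar (compress U X)"
proof -
  have "m2_mult (m2_mult (m2_star U) (m2_star X)) U = m2_star (m2_mult (m2_mult (m2_star U) X) U)"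
    by (simp add: m2_star_mult m2_mult_assoc)
  thus ?thesis unfolding compress_def by (cases "m2_mult (m2_mult (m2_star U) X) U") simp
qed

lemma compress_unit:
  "m2_unitary U \<Longrightarrow> compress U (m2_mult (m2_mult U (corner 1)) (m2_star U)) = 1"
  by (simp add: compress_def m2_mult_assoc m2_unitaryD)

lemma compress_zero: "compress U m2_zero = 0"
  by (cases U) (simp add: compress_def m2_zero_def diag_def)

lemma corner_unitary_form:
  assumes l: "m2_mult (m2_star X) X = corner 1" and r: "m2_mult X (m2_star X) = corner (1::'a::cstar_algebra)"
  shows "X = corner (e11 X)" "unitary (e11 X)"
proof -
  obtain a b c d where X: "X = M2 a b c d" by (cases X)
  have "m2_mult (m2_star X) (m2_mult (m2_mult X (m2_star X)) X)
      = m2_mult (m2_mult (m2_star X) X) (m2_mult (m2_star X) X)"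
    by (simp add: m2_mult_assoc)
  hence "m2_mult (m2_star X) (m2_mult (corner 1) X) = corner 1" by (simp only: l r corner_mult mult_1)
  hence "cstar b * b = 0" by (simp add: X)
  hence b: "b = 0" by (rule cstar_mult_self_eq_0)
  have "m2_mult X (m2_mult (m2_mult (m2_star X) X) (m2_star X))
      = m2_mult (m2_mult X (m2_star X)) (m2_mult X (m2_star X))"
    by (simp add: m2_mult_assoc)
  hence "m2_mult X (m2_mult (corner 1) (m2_star X)) = corner 1" by (simp only: l r corner_mult mult_1)
  hence "c * cstar c = 0" by (simp add: X)
  hence c: "c = 0" by (rule mult_cstar_self_eq_0)
  have "cstar d * d = 0" using l by (simp add: X b c)
  hence d: "d = 0" by (rule cstar_mult_self_eq_0)
  show "X = corner (e11 X)" by (simp add: X b c d)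
  show "unitary (e11 X)" using l r by (simp add: X b c unitary_def)
qed

definition transport :: "'a::cstar_algebra m2 \<Rightarrow> 'a \<Rightarrow> 'a m2" where
  "transport W y = m2_mult (m2_mult (m2_star W) (corner y)) W"

lemma transport_hom:
  fixes W P :: "'a::cstar_algebra m2"
  assumes l: "m2_mult (m2_star W) W = P" and r: "m2_mult W (m2_star W) = corner 1"
    and P: "m2_mult P P = P"
  shows "m2_mult (transport W y) (transport W z) = transport W (y * z)"
    "m2_star (transport W y) = transport W (cstar y)"
    "m2_mult (m2_mult P (transport W y)) P = transport W y"
    "transport W 1 = P" "transport W 0 = m2_zero"
proof -
  show "m2_mult (transport W y) (transport W z) = transport W (y * z)"
    by (simp add: transport_def m2_mult_assoc m2_mult_assoc_subst[OF r]
        m2_mult_assoc_subst[OF corner_mult])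
  show "m2_star (transport W y) = transport W (cstar y)"
    by (simp add: transport_def m2_star_mult m2_mult_assoc)
  have PW: "m2_mult P (m2_star W) = m2_mult (m2_star W) (corner 1)"
    by (simp add: l[symmetric] m2_mult_assoc r)
  have WP: "m2_mult W P = m2_mult (corner 1) W"
    by (simp add: l[symmetric] m2_mult_assoc[symmetric] r)
  show "m2_mult (m2_mult P (transport W y)) P = transport W y"
    by (simp add: transport_def m2_mult_assoc m2_mult_assoc_subst[OF PW] WP
        m2_mult_assoc_subst[OF corner_mult])
  have "transport W 1 = m2_mult (m2_mult (m2_star W) W) (m2_mult (m2_star W) W)"
    by (simp add: transport_def r[symmetric] m2_mult_assoc)
  thus "transport W 1 = P" by (simp add: l P)
  show "transport W 0 = m2_zero"
    by (cases W) (simp add: transport_def m2_zero_def diag_def)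
qed

lemma m2_cont_transport: "m2_cont S w \<Longrightarrow> m2_cont S (\<lambda>t. transport (w t) y)"
  unfolding transport_def by (intro m2_cont_mult m2_cont_star m2_cont_const)

lemma isometry_combination:
  fixes r1 r2 a c :: "'a::cstar_algebra"
  assumes r1: "cstar r1 * r1 = 1" and r2: "cstar r2 * r2 = 1" and r12: "cstar r1 * r2 = 0"
    and ac: "cstar a * a + cstar c * c = 1"
  shows "cstar (r1 * a + r2 * c) * (r1 * a + r2 * c) = 1"
proof -
  have r21: "cstar r2 * r1 = 0" using arg_cong[OF r12, of cstar] by (simp add: cstar_mult cstar_cstar)
  have "cstar (r1 * a + r2 * c) * (r1 * a + r2 * c) = cstar a * a + cstar c * c"
    by (simp add: cstar_add cstar_mult algebra_simps r1 r2 r12 r21 mult_assoc_subst[OF r1]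
        mult_assoc_subst[OF r2] mult_assoc_subst[OF r12] mult_assoc_subst[OF r21])
  thus ?thesis using ac by simp
qed

lemma complement_projection:
  fixes s k :: "'a::cstar_algebra"
  assumes s: "cstar s * s = 1" and k: "cstar k * k = 1" and sk: "cstar s * k = 0"
  defines "q \<equiv> 1 - s * cstar s - k * cstar k"
  shows "cstar q = q" "q * q = q" "cstar s * q = 0" "cstar k * q = 0" "q * s = 0" "q * k = 0"
proof -
  have ks: "cstar k * s = 0" using arg_cong[OF sk, of cstar] by (simp add: cstar_mult cstar_cstar)
  note rules = s k sk ks mult_assoc_subst[OF s] mult_assoc_subst[OF k]
    mult_assoc_subst[OF sk] mult_assoc_subst[OF ks]
  show q: "cstar q = q" by (simp add: q_def cstar_mult cstar_cstar)
  show "q * q = q" by (simp add: q_def algebra_simps rules)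
  show sq: "cstar s * q = 0" by (simp add: q_def algebra_simps rules)
  show kq: "cstar k * q = 0" by (simp add: q_def algebra_simps rules)
  show "q * s = 0" using arg_cong[OF sq, of cstar] by (simp add: q cstar_mult cstar_cstar)
  show "q * k = 0" using arg_cong[OF kq, of cstar] by (simp add: q cstar_mult cstar_cstar)
qed

text \<open>Compressing a unitary \<open>U = [a b; c d]\<close> by the isometry \<open>T = (s k) : A\<^sup>2 \<rightarrow> A\<close>: the
  column \<open>Y = U T\<^sup>* = (y\<^sub>1, y\<^sub>2)\<close> is a co-isometry \<open>A \<rightarrow> A\<^sup>2\<close> with \<open>Y\<^sup>* Y = T T\<^sup>*\<close>.\<close>
lemma unitary_compression:
  fixes a b c d s k :: "'a::cstar_algebra"
  assumes U: "m2_unitary (M2 a b c d)"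
    and s: "cstar s * s = 1" and k: "cstar k * k = 1" and sk: "cstar s * k = 0"
  defines "y1 \<equiv> a * cstar s + b * cstar k" and "y2 \<equiv> c * cstar s + d * cstar k"
  shows "y1 * cstar y1 = 1" "y2 * cstar y2 = 1" "y1 * cstar y2 = 0"
    "cstar y1 * y1 + cstar y2 * y2 = s * cstar s + k * cstar k"
proof -
  note u = m2_unitary_entries[OF U]
  have ks: "cstar k * s = 0" using arg_cong[OF sk, of cstar] by (simp add: cstar_mult cstar_cstar)
  have u': "cstar b * a + cstar d * c = 0"
    using arg_cong[OF u(2), of cstar] by (simp add: cstar_add cstar_mult cstar_cstar)
  note rules = s k sk ks mult_assoc_subst[OF s] mult_assoc_subst[OF k]
    mult_assoc_subst[OF sk] mult_assoc_subst[OF ks] cstar_add cstar_mult cstar_cstar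
  have "y1 * cstar y1 = a * cstar a + b * cstar b" by (simp add: y1_def algebra_simps rules)
  thus "y1 * cstar y1 = 1" using u(4) by simp
  have "y2 * cstar y2 = c * cstar c + d * cstar d" by (simp add: y2_def algebra_simps rules)
  thus "y2 * cstar y2 = 1" using u(6) by simp
  have "y1 * cstar y2 = a * cstar c + b * cstar d" by (simp add: y1_def y2_def algebra_simps rules)
  thus "y1 * cstar y2 = 0" using u(5) by simp
  have "cstar y1 * y1 + cstar y2 * y2 = s * (cstar a * a + cstar c * c) * cstar s
       + s * (cstar a * b + cstar c * d) * cstar k + k * (cstar b * a + cstar d * c) * cstar s
       + k * (cstar b * b + cstar d * d) * cstar k"
    by (simp add: y1_def y2_def cstar_add cstar_mult cstar_cstar algebra_simps)
  thus "cstar y1 * y1 + cstar y2 * y2 = s * cstar s + k * cstar k" by (simp add: u u')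
qed

text \<open>For isometries \<open>m, s\<close>, the element \<open>z = m s m\<^sup>* + (1 - m m\<^sup>*)\<close> is an isometry which acts
  as \<open>s\<close> on the range of \<open>m\<close> and as the identity on its complement.\<close>
lemma conjugated_isometry:
  fixes m s :: "'a::cstar_algebra"
  assumes m: "cstar m * m = 1" and s: "cstar s * s = 1"
  defines "z \<equiv> m * s * cstar m + 1 - m * cstar m"
  shows "cstar z * z = 1" "cstar z * m = m * cstar s" "cstar m * z = s * cstar m"
    "z * cstar z = m * s * cstar s * cstar m + 1 - m * cstar m"
proof -
  note rules = m s mult_assoc_subst[OF m] mult_assoc_subst[OF s] cstar_add cstar_mult cstar_cstar
  show "cstar z * z = 1" by (simp add: z_def algebra_simps rules)
  show zm: "cstar z * m = m * cstar s" by (simp add: z_def algebra_simps rules)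
  show "cstar m * z = s * cstar m"
    using arg_cong[OF zm, of cstar] by (simp add: cstar_mult cstar_cstar)
  show "z * cstar z = m * s * cstar s * cstar m + 1 - m * cstar m"
    by (simp add: z_def algebra_simps rules)
qed

text \<open>Given a unitary \<open>U = [a b; c d]\<close> in \<open>M\<^sub>2(A)\<close> and two pairs of
  isometries \<open>s\<^sub>1, s\<^sub>2\<close> and \<open>r\<^sub>1, r\<^sub>2\<close> with orthogonal ranges, it is assembled from
  \<^item> the isometry \<open>k = s\<^sub>2 (a s\<^sub>1\<^sup>* + b s\<^sub>2\<^sup>*)\<^sup>*\<close>, whose range is orthogonal to that of \<open>s\<^sub>1\<close>,
  \<^item> the compression \<open>(y\<^sub>1, y\<^sub>2)\<close> of \<open>U\<close> by \<open>(s\<^sub>1 k)\<close> and the complementary projection \<open>q\<close>,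
  \<^item> the isometry \<open>m = r\<^sub>1 a + r\<^sub>2 c\<close> and the isometry \<open>z\<close> acting as \<open>s\<^sub>1\<close> on the range of \<open>m\<close>.
  It depends continuously on all data, and for \<open>U = diag(v,1)\<close> it intertwines conjugation
  of \<open>s\<^sub>1, s\<^sub>2\<close> by \<open>v\<close> with right multiplication by \<open>v\<close> (lemma \<open>glue_diag\<close>).\<close>
definition glue :: "'a::cstar_algebra \<Rightarrow> 'a \<Rightarrow> 'a \<Rightarrow> 'a \<Rightarrow> 'a \<Rightarrow> 'a \<Rightarrow> 'a \<Rightarrow> 'a \<Rightarrow> 'a" where
  "glue a b c d s1 s2 r1 r2 =
    (let k = s2 * cstar (a * cstar s1 + b * cstar s2); m = r1 * a + r2 * c;
         q = 1 - s1 * cstar s1 - k * cstar k;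
         y1 = a * cstar s1 + b * cstar k; y2 = c * cstar s1 + d * cstar k;
         z = m * s1 * cstar m + 1 - m * cstar m
     in z * y1 + m * k * y2 + m * q)"

lemma glue_unitary:
  fixes a b c d s1 s2 r1 r2 :: "'a::cstar_algebra"
  assumes U: "m2_unitary (M2 a b c d)"
    and s1: "cstar s1 * s1 = 1" and s2: "cstar s2 * s2 = 1" and s12: "cstar s1 * s2 = 0"
    and r1: "cstar r1 * r1 = 1" and r2: "cstar r2 * r2 = 1" and r12: "cstar r1 * r2 = 0"
  shows "unitary (glue a b c d s1 s2 r1 r2)"
proof -
  note u = m2_unitary_entries[OF U]
  note cs = cstar_add cstar_mult cstar_cstar cstar_diff
  have s21: "cstar s2 * s1 = 0" using arg_cong[OF s12, of cstar] by (simp add: cs)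
  define k where "k = s2 * cstar (a * cstar s1 + b * cstar s2)"
  define m where "m = r1 * a + r2 * c"
  define q where "q = 1 - s1 * cstar s1 - k * cstar k"
  define y1 where "y1 = a * cstar s1 + b * cstar k"
  define y2 where "y2 = c * cstar s1 + d * cstar k"
  define z where "z = m * s1 * cstar m + 1 - m * cstar m"
  have W: "glue a b c d s1 s2 r1 r2 = z * y1 + m * k * y2 + m * q"
    by (simp add: glue_def Let_def k_def m_def q_def y1_def y2_def z_def)
  have h: "cstar (s1 * cstar a + s2 * cstar b) * (s1 * cstar a + s2 * cstar b) = 1"
    using isometry_combination[OF s1 s2 s12, of "cstar a" "cstar b"] u(4) by (simp add: cstar_cstar)
  have k: "cstar k * k = 1"
    using h by (simp add: k_def cs mult.assoc mult_assoc_subst[OF s2])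
  have s1k: "cstar s1 * k = 0" by (simp add: k_def mult_assoc_subst[OF s12])
  have m: "cstar m * m = 1" using isometry_combination[OF r1 r2 r12 u(1)] by (simp add: m_def)
  note Q = complement_projection[OF s1 k s1k, folded q_def]
  note Y = unitary_compression[OF U s1 k s1k, folded y1_def y2_def]
  note Z = conjugated_isometry[OF m s1, folded z_def]
  have ks1: "cstar k * s1 = 0" using arg_cong[OF s1k, of cstar] by (simp add: cs)
  have y21: "y2 * cstar y1 = 0" using arg_cong[OF Y(3), of cstar] by (simp add: cs)
  have yq: "y1 * q = 0" "y2 * q = 0" by (simp_all add: y1_def y2_def algebra_simps Q(3,4))
  have qy: "q * cstar y1 = 0" "q * cstar y2 = 0"
    using arg_cong[OF yq(1), of cstar] arg_cong[OF yq(2), of cstar] by (simp_all add: cs Q(1))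
  note orth = s1 s2 s12 s21 mult_assoc_subst[OF s1] mult_assoc_subst[OF s2]
    mult_assoc_subst[OF s12] mult_assoc_subst[OF s21]
  note rels = k m s1k ks1 Y(1-3) y21 yq qy Q(2-6) Z(1-3) mult_assoc_subst[OF k] mult_assoc_subst[OF m]
    mult_assoc_subst[OF s1k] mult_assoc_subst[OF ks1] mult_assoc_subst[OF Q(3)]
    mult_assoc_subst[OF Q(4)] mult_assoc_subst[OF Q(5)] mult_assoc_subst[OF Q(6)]
    mult_assoc_subst[OF Y(1)] mult_assoc_subst[OF Y(2)] mult_assoc_subst[OF Y(3)]
    mult_assoc_subst[OF y21] mult_assoc_subst[OF yq(1)] mult_assoc_subst[OF yq(2)]
    mult_assoc_subst[OF qy(1)] mult_assoc_subst[OF qy(2)] mult_assoc_subst[OF Q(2)]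
    mult_assoc_subst[OF Z(1)] mult_assoc_subst[OF Z(2)] mult_assoc_subst[OF Z(3)]
  have "cstar (glue a b c d s1 s2 r1 r2) * glue a b c d s1 s2 r1 r2
      = cstar y1 * y1 + cstar y2 * y2 + q"
    unfolding W by (simp add: cs Q(1) algebra_simps orth rels)
  also have "\<dots> = 1" by (simp add: Y(4) q_def)
  finally have left: "cstar (glue a b c d s1 s2 r1 r2) * glue a b c d s1 s2 r1 r2 = 1" .
  have "glue a b c d s1 s2 r1 r2 * cstar (glue a b c d s1 s2 r1 r2)
      = z * cstar z + m * k * cstar k * cstar m + m * q * cstar m"
    unfolding W by (simp add: cs Q(1) algebra_simps orth rels)
  also have "\<dots> = 1" unfolding Z(4) q_def by (simp add: algebra_simps)
  finally show ?thesis using left by (simp add: unitary_def)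
qed

lemma glue_diag:
  fixes v s1 s2 r1 r2 :: "'a::cstar_algebra"
  assumes v: "unitary v"
  shows "glue v 0 0 1 (cstar v * s1 * v) (cstar v * s2 * v) r1 r2 = glue 1 0 0 1 s1 s2 r1 r2 * v"
proof -
  have v1: "cstar v * v = 1" and v2: "v * cstar v = 1" using v by (simp_all add: unitary_def)
  show ?thesis
    by (simp add: glue_def Let_def cstar_mult cstar_cstar algebra_simps v1 v2
        mult_assoc_subst[OF v1] mult_assoc_subst[OF v2])
qed

text \<open>A properly infinite unital C*-algebra contains two isometries with orthogonal ranges:
  if \<open>w\<^sub>e\<^sup>* w\<^sub>e = e\<close>, \<open>w\<^sub>e w\<^sub>e\<^sup>* = 1\<close> and similarly for \<open>f\<close>, take \<open>r\<^sub>1 = w\<^sub>e\<^sup>*\<close>, \<open>r\<^sub>2 = w\<^sub>f\<^sup>*\<close>.\<close>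
lemma properly_infinite_isometries:
  assumes "properly_infinite TYPE('a)"
  obtains r1 r2 :: "'a::cstar_algebra" where "cstar r1 * r1 = 1" "cstar r2 * r2 = 1" "cstar r1 * r2 = 0"
proof -
  obtain e f :: 'a where ef: "e * f = 0" and "mvn e 1" "mvn f 1"
    using assms unfolding properly_infinite_def by blast
  then obtain we wf :: 'a where we: "cstar we * we = e" "we * cstar we = 1"
    and wf: "cstar wf * wf = f" "wf * cstar wf = 1" unfolding mvn_def by blast
  have r1: "cstar (cstar we) * cstar we = 1" and r2: "cstar (cstar wf) * cstar wf = 1"
    using we wf by (simp_all add: cstar_cstar)
  have "(cstar we * cstar (cstar we)) * (cstar wf * cstar (cstar wf)) = 0"
    using we wf ef by (simp add: cstar_cstar)
  with r1 r2 show ?thesis by (intro that r1 r2 isometries_orthogonal)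
qed

locale unitary_loop =
  fixes v :: "'a::cstar_algebra" and u :: "real \<Rightarrow> 'a m2"
  assumes v_unitary: "unitary v" and u_cont: "m2_cont {0..1} u"
    and u_unitary: "\<forall>t\<in>{0..1}. m2_unitary (u t)"
    and u_0: "u 0 = m2_one" and u_1: "u 1 = diag v 1"
begin

definition p :: "real \<Rightarrow> 'a m2" where
  "p = (\<lambda>t. m2_mult (m2_mult (u t) (diag 1 0)) (m2_star (u t)))"

lemma p_corner: "p t = m2_mult (m2_mult (u t) (corner 1)) (m2_star (u t))"
  by (simp add: p_def diag_1_0)

lemma p_idem: "t \<in> {0..1} \<Longrightarrow> m2_mult (p t) (p t) = p t"
  using m2_unitaryD[of "u t"] u_unitary
  by (simp add: p_corner m2_mult_assoc m2_mult_assoc_subst[OF corner_mult])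

lemma p_selfadjoint: "m2_star (p t) = p t"
  by (simp add: p_corner m2_star_mult m2_mult_assoc)

lemma compress_endpoints: "compress (u 1) Y = cstar v * compress (u 0) Y * v"
  by (cases Y) (simp add: compress_def u_0 u_1 diag_def m2_one_def mult.assoc)

lemma continuous_compress:
  "m2_cont {0..1} X \<Longrightarrow> continuous_on {0..1} (\<lambda>t. compress (u t) (X t))"
  using m2_cont_mult[OF m2_cont_mult[OF m2_cont_star[OF u_cont]] u_cont]
  unfolding compress_def m2_cont_def by simp

text \<open>(i) \<open>\<Longrightarrow>\<close> (ii): if \<open>g\<close> connects \<open>v\<close> to \<open>1\<close>, then \<open>w(t) = diag(g(1-t),0) u(t)\<^sup>*\<close> is a
  loop of partial isometries from \<open>p\<close> to \<open>diag(1,0)\<close>.\<close>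
lemma homotopic_imp_mvn: "homotopic_to_one v \<Longrightarrow> mvn_CT p (\<lambda>_. diag 1 0)"
proof -
  assume "homotopic_to_one v"
  then obtain g :: "real \<Rightarrow> 'a" where g_cont: "continuous_on {0..1} g"
    and g_unitary: "\<forall>t\<in>{0..1}. unitary (g t)" and g_0: "g 0 = v" and g_1: "g 1 = 1"
    unfolding homotopic_to_one_def by blast
  define w where "w = (\<lambda>t. m2_mult (corner (g (1 - t))) (m2_star (u t)))"
  have "continuous_on {0..1} (\<lambda>t. g (1 - t))"
    by (rule continuous_on_compose2[OF g_cont]) (auto intro: continuous_intros)
  hence "m2_cont {0..1} w"
    unfolding w_def by (intro m2_cont_mult m2_cont_star u_cont m2_cont_corner)
  moreover have "w 0 = w 1" using v_unitary by (simp add: w_def g_0 g_1 u_0 u_1 m2_one_def diag_def unitary_def)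
  moreover have "m2_mult (m2_star (w t)) (w t) = p t \<and> m2_mult (w t) (m2_star (w t)) = diag 1 0"
    if t: "t \<in> {0..1}" for t
    using g_unitary m2_unitaryD[of "u t"] u_unitary t
    by (simp add: w_def p_corner diag_1_0 m2_star_mult m2_mult_assoc unitary_def
        m2_mult_assoc_subst[OF corner_mult])
  ultimately show ?thesis unfolding mvn_CT_def in_CT_def by blast
qed

text \<open>(ii) \<open>\<Longrightarrow>\<close> (i): if \<open>w\<close> implements \<open>p \<sim> diag(1,0)\<close>, then \<open>w(t) u(t) = diag(g(t),0)\<close> for a
  path of unitaries \<open>g\<close>, and periodicity of \<open>w\<close> gives \<open>g(1) = g(0) v\<close>.\<close>
lemma mvn_imp_homotopic: "mvn_CT p (\<lambda>_. diag 1 0) \<Longrightarrow> homotopic_to_one v"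
proof -
  assume "mvn_CT p (\<lambda>_. diag 1 0)"
  then obtain w where w_cont: "m2_cont {0..1} w" and w_loop: "w 0 = w 1"
    and w: "\<forall>t\<in>{0..1}. m2_mult (m2_star (w t)) (w t) = p t
                     \<and> m2_mult (w t) (m2_star (w t)) = corner 1"
    unfolding mvn_CT_def in_CT_def diag_1_0 by blast
  define x where "x = (\<lambda>t. m2_mult (w t) (u t))"
  have x_form: "x t = corner (e11 (x t)) \<and> unitary (e11 (x t))" if t: "t \<in> {0..1}" for t
  proof -
    note uD = m2_unitaryD[of "u t"]
    have l: "m2_mult (m2_star (w t)) (w t) = p t" and r: "m2_mult (w t) (m2_star (w t)) = corner 1"
      using w t by auto
    have "m2_mult (m2_star (x t)) (x t) = corner 1" using u_unitary t
      by (simp add: x_def m2_star_mult m2_mult_assoc m2_mult_assoc_subst[OF l] p_corner uD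
          m2_mult_assoc_subst[OF uD(1)] m2_mult_assoc_subst[OF uD(2)]
          m2_mult_assoc_subst[OF corner_mult])
    moreover have "m2_mult (x t) (m2_star (x t)) = corner 1" using u_unitary t
      by (simp add: x_def m2_star_mult m2_mult_assoc uD r)
    ultimately show ?thesis using corner_unitary_form by blast
  qed
  define g where "g = (\<lambda>t. e11 (x t))"
  have "continuous_on {0..1} g"
    using m2_cont_mult[OF w_cont u_cont] unfolding g_def x_def m2_cont_def by simp
  moreover have "\<forall>t\<in>{0..1}. unitary (g t)" using x_form by (simp add: g_def)
  moreover have "g 1 = g 0 * v"
  proof -
    have "x 1 = m2_mult (x 0) (diag v 1)" by (simp add: x_def u_0 u_1 w_loop)
    also have "\<dots> = corner (g 0 * v)"
    proof -
      have "x 0 = corner (g 0)" using x_form[of 0] by (simp add: g_def)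
      thus ?thesis by (simp add: diag_def)
    qed
    finally show ?thesis by (simp add: g_def)
  qed
  ultimately show ?thesis by (rule homotopic_to_one_from_path)
qed


text \<open>(ii) \<open>\<Longrightarrow>\<close> (iii) for properly infinite \<open>A\<close>: a loop \<open>w\<close> implementing \<open>p \<sim> diag(1,0)\<close>
  transports \<open>A\<close> isomorphically onto \<open>\<B>\<close>, so the witnesses of proper infiniteness of \<open>A\<close>
  are carried over to \<open>\<B>\<close>.\<close>
lemma mvn_imp_properly_infinite_corner:
  assumes A: "properly_infinite TYPE('a)" and M: "mvn_CT p (\<lambda>_. diag 1 0)"
  shows "properly_infinite_corner p"
proof -
  obtain e f :: 'a where e: "is_proj e" and f: "is_proj f" and ef: "e * f = 0"
    and "mvn e 1" "mvn f 1"
    using A unfolding properly_infinite_def by blast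
  then obtain we wf :: 'a where we: "cstar we * we = e" "we * cstar we = 1"
    and wf: "cstar wf * wf = f" "wf * cstar wf = 1" unfolding mvn_def by blast
  obtain w where w_cont: "m2_cont {0..1} w" and w_loop: "w 0 = w 1"
    and w: "\<forall>t\<in>{0..1}. m2_mult (m2_star (w t)) (w t) = p t
                     \<and> m2_mult (w t) (m2_star (w t)) = corner 1"
    using M unfolding mvn_CT_def in_CT_def diag_1_0 by blast
  define T where "T = (\<lambda>y t. transport (w t) y)"
  have hom: "m2_mult (T y t) (T z t) = T (y * z) t" "m2_star (T y t) = T (cstar y) t"
    "m2_mult (m2_mult (p t) (T y t)) (p t) = T y t" "T 1 t = p t" "T 0 t = m2_zero"
    if "t \<in> {0..1}" for t y z
    unfolding T_def using transport_hom[of "w t" "p t"] w p_idem that by auto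
  have corner: "in_corner p (T y)" for y
    unfolding in_corner_def in_CT_def T_def
    using hom(3) m2_cont_transport[OF w_cont] w_loop by (auto simp: T_def)
  have "proj_corner p (T e)" "proj_corner p (T f)"
    using corner hom e f by (auto simp: proj_corner_def is_proj_def)
  moreover have "\<forall>t\<in>{0..1}. m2_mult (T e t) (T f t) = m2_zero" using hom ef by auto
  moreover have "mvn_corner p (T e) p"
    unfolding mvn_corner_def using corner hom we by (auto intro!: exI[of _ "T we"])
  moreover have "mvn_corner p (T f) p"
    unfolding mvn_corner_def using corner hom wf by (auto intro!: exI[of _ "T wf"])
  ultimately show ?thesis unfolding properly_infinite_corner_def by blast
qed


lemma corner_isometry_family:
  assumes W: "in_corner p W" and E: "in_corner p E"
    and WE: "\<forall>t\<in>{0..1}. m2_mult (m2_star (W t)) (W t) = E t \<and> m2_mult (W t) (m2_star (W t)) = p t"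
  obtains s where "continuous_on {0..1} s" "s 1 = cstar v * s 0 * v"
    "\<And>t. t \<in> {0..1} \<Longrightarrow> cstar (s t) * s t = 1 \<and> s t * cstar (s t) = compress (u t) (E t)"
proof
  define s where "s = (\<lambda>t. cstar (compress (u t) (W t)))"
  have W_cont: "m2_cont {0..1} W" and W_loop: "W 0 = W 1" using W by (auto simp: in_corner_def in_CT_def)
  show "continuous_on {0..1} s"
    unfolding s_def by (intro continuous_on_cstar continuous_compress W_cont)
  show "s 1 = cstar v * s 0 * v"
    by (simp add: s_def compress_endpoints W_loop cstar_mult cstar_cstar mult.assoc)
  fix t :: real
  assume t: "t \<in> {0..1}"
  have U: "m2_unitary (u t)" using u_unitary t by auto
  have cW: "m2_mult (m2_mult (p t) (W t)) (p t) = W t"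
    and cE: "m2_mult (m2_mult (p t) (E t)) (p t) = E t" using W E t by (auto simp: in_corner_def)
  have cW': "m2_mult (m2_mult (p t) (m2_star (W t))) (p t) = m2_star (W t)"
    using arg_cong[OF cW, of m2_star] by (simp add: m2_star_mult m2_mult_assoc p_selfadjoint)
  have "cstar (s t) * s t = compress (u t) (m2_mult (W t) (m2_star (W t)))"
    by (simp add: s_def cstar_cstar compress_mult[OF U p_corner cW cW'] compress_star)
  moreover have "s t * cstar (s t) = compress (u t) (m2_mult (m2_star (W t)) (W t))"
    by (simp add: s_def cstar_cstar compress_mult[OF U p_corner cW' cW] compress_star)
  ultimately show "cstar (s t) * s t = 1 \<and> s t * cstar (s t) = compress (u t) (E t)"
    using WE t compress_unit[OF U] by (simp add: p_corner)
qed


lemma properly_infinite_corner_imp_homotopic: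
  assumes A: "properly_infinite TYPE('a)" and B: "properly_infinite_corner p"
  shows "homotopic_to_one v"
proof -
  obtain r1 r2 :: 'a where r: "cstar r1 * r1 = 1" "cstar r2 * r2 = 1" "cstar r1 * r2 = 0"
    using properly_infinite_isometries[OF A] by blast
  obtain E F where E: "proj_corner p E" and F: "proj_corner p F"
    and EF: "\<forall>t\<in>{0..1}. m2_mult (E t) (F t) = m2_zero"
    and "mvn_corner p E p" "mvn_corner p F p"
    using B unfolding properly_infinite_corner_def by blast
  then obtain WE WF where WE: "in_corner p WE" "\<forall>t\<in>{0..1}. m2_mult (m2_star (WE t)) (WE t) = E t
      \<and> m2_mult (WE t) (m2_star (WE t)) = p t"
    and WF: "in_corner p WF" "\<forall>t\<in>{0..1}. m2_mult (m2_star (WF t)) (WF t) = F t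
      \<and> m2_mult (WF t) (m2_star (WF t)) = p t"
    unfolding mvn_corner_def by blast
  have E_corner: "in_corner p E" and F_corner: "in_corner p F"
    using E F by (auto simp: proj_corner_def)
  obtain s1 where S1: "continuous_on {0..1} s1" "s1 1 = cstar v * s1 0 * v"
    "\<And>t. t \<in> {0..1} \<Longrightarrow> cstar (s1 t) * s1 t = 1 \<and> s1 t * cstar (s1 t) = compress (u t) (E t)"
    using corner_isometry_family[OF WE(1) E_corner WE(2)] by blast
  obtain s2 where S2: "continuous_on {0..1} s2" "s2 1 = cstar v * s2 0 * v"
    "\<And>t. t \<in> {0..1} \<Longrightarrow> cstar (s2 t) * s2 t = 1 \<and> s2 t * cstar (s2 t) = compress (u t) (F t)"
    using corner_isometry_family[OF WF(1) F_corner WF(2)] by blast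
  have s12: "cstar (s1 t) * s2 t = 0" if t: "t \<in> {0..1}" for t
  proof (rule isometries_orthogonal)
    have U: "m2_unitary (u t)" using u_unitary t by auto
    have "compress (u t) (E t) * compress (u t) (F t) = compress (u t) (m2_mult (E t) (F t))"
      using E_corner F_corner t by (simp add: compress_mult[OF U p_corner] in_corner_def)
    thus "s1 t * cstar (s1 t) * (s2 t * cstar (s2 t)) = 0"
      using S1(3)[OF t] S2(3)[OF t] EF t by (simp add: compress_zero)
  qed (use S1(3)[OF t] S2(3)[OF t] in auto)
  define g where
    "g = (\<lambda>t. glue (e11 (u t)) (e12 (u t)) (e21 (u t)) (e22 (u t)) (s1 t) (s2 t) r1 r2)"
  have "continuous_on {0..1} g"
    using u_cont S1(1) S2(1) unfolding g_def glue_def Let_def m2_cont_def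
    by (intro continuous_intros) auto
  moreover have "\<forall>t\<in>{0..1}. unitary (g t)"
  proof
    fix t :: real assume t: "t \<in> {0..1}"
    have "m2_unitary (M2 (e11 (u t)) (e12 (u t)) (e21 (u t)) (e22 (u t)))"
      using u_unitary t by simp
    thus "unitary (g t)"
      unfolding g_def using S1(3)[OF t] S2(3)[OF t] s12[OF t] r by (intro glue_unitary) auto
  qed
  moreover have "g 1 = g 0 * v"
    using glue_diag[OF v_unitary, of "s1 0" "s2 0" r1 r2] S1(2) S2(2)
    by (simp add: g_def u_0 u_1 diag_def m2_one_def)
  ultimately show ?thesis by (rule homotopic_to_one_from_path)
qed

end

theorem proposition4p7:
  fixes v :: "'a::cstar_algebra" and u :: "real \<Rightarrow> 'a m2"
  defines "p \<equiv> (\<lambda>t. m2_mult (m2_mult (u t) (diag 1 0)) (m2_star (u t)))"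
  assumes "unitary v"
    and "m2_cont {0..1} u"
    and "\<forall>t\<in>{0..1}. m2_unitary (u t)"
    and "u 0 = m2_one"
    and "u 1 = diag v 1"
  shows "(homotopic_to_one v \<longleftrightarrow> mvn_CT p (\<lambda>_. diag 1 0))
     \<and> (properly_infinite TYPE('a) \<longrightarrow>
          ((homotopic_to_one v \<longleftrightarrow> mvn_CT p (\<lambda>_. diag 1 0))
           \<and> (mvn_CT p (\<lambda>_. diag 1 0) \<longleftrightarrow> properly_infinite_corner p)))"
proof -
  have loop: "unitary_loop v u" using assms by unfold_locales auto
  have p: "p = unitary_loop.p u" by (simp add: p_def unitary_loop.p_def[OF loop])
  interpret unitary_loop v u by (rule loop)
  have i_ii: "homotopic_to_one v \<longleftrightarrow> mvn_CT p (\<lambda>_. diag 1 0)"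
    unfolding p using homotopic_imp_mvn mvn_imp_homotopic by blast
  moreover have "mvn_CT p (\<lambda>_. diag 1 0) \<longleftrightarrow> properly_infinite_corner p"
    if "properly_infinite TYPE('a)"
    unfolding p using that i_ii[unfolded p] mvn_imp_properly_infinite_corner
      properly_infinite_corner_imp_homotopic by blast
  ultimately show ?thesis by blast
qed

end
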